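(* Let $n\ge 3$ and let $T=(l_1,\dots,l_n)$, $l_1\le\cdots\le l_n$, be an impossibly burnable $n$-path forest of order $m^2$. If $B_m(l_i)\le 2$ for some $i$, then $l_1\le 12n-2\sqrt{30n-27}-8$. In particular, if $l_1=M_n$ then $B_m(l_i)\ge 3$ for every $i\in[n]$.
   Context: A path forest is a disjoint union of paths; an $n$-path forest is represented by the tuple $(l_1,\dots,l_n)$ of its path orders, with total order $\sum_i l_i=m^2$. For $m\in\mathbb{N}$ and an integer $1\le l\le m^2$, let $B_m(l)$ be the least positive integer $t$ with $t\equiv l\pmod 2$ such that $l\le 2mt-t^2$. An $n$-path forest of order $m^2$ is impossibly burnable if $\sum_{i=1}^n B_m(l_i)>m$. For $n\ge2$, $M_n$ denotes the maximum of $l_1$ over all impossibly burnable $n$-path forests. *)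

theory Defs
  imports Complex_Main
begin

definition Bm :: "nat \<Rightarrow> nat \<Rightarrow> nat" where
  "Bm m l = (LEAST t. t > 0 \<and> t mod 2 = l mod 2 \<and> int l \<le> 2 * int m * int t - (int t)^2)"

text \<open>An n-path forest of order N, given by the list of its path orders (each path has >= 1 vertex).\<close>
definition path_forest :: "nat \<Rightarrow> nat \<Rightarrow> nat list \<Rightarrow> bool" where
  "path_forest n N ls \<longleftrightarrow> length ls = n \<and> (\<forall>l\<in>set ls. 1 \<le> l) \<and> sum_list ls = N"

definition impossibly_burnable :: "nat \<Rightarrow> nat list \<Rightarrow> bool" where
  "impossibly_burnable m ls \<longleftrightarrow>
     path_forest (length ls) (m^2) ls \<and> sum_list (map (Bm m) ls) > m"

definition Mn :: "nat \<Rightarrow> nat" where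
  "Mn n = (GREATEST x. \<exists>m ls. length ls = n \<and> sorted ls \<and> impossibly_burnable m ls \<and> x = ls ! 0)"

end

theory Submission
  imports Defs "HOL-Library.Discrete_Functions"
begin

(*
  Write t_i = B_m(l_i). Since B_m(l) has the parity of l, the impossibility condition
  sum t_i > m sharpens to sum t_i >= m + 2, and minimality of B_m gives the concave lower bound
  l_i >= 2m(t_i - 2) - (t_i - 2)^2 + 2 whenever t_i >= 3. If some t_j <= 2 then l_1 <= 4m - 2.
  Bounding every l_i from below by a line in t_i lying under a chord of the concave bound and
  summing against sum l_i = m^2 yields an integer c >= 1 with
  c l_1 <= 12nc - 8c - 3c^2 - 10n + 9, and optimising over c gives the square-root bound.
  For the second claim, an explicit forest with floor(sqrt(2n)) paths of odd order just above 2m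
  and all other paths of order 4m - 2 is impossibly burnable and has smallest path beyond the
  bound; since l_1 <= 16n for every impossibly burnable n-path forest, M_n is at least that large.
*)

section \<open>The function B_m\<close>

definition reach :: "int \<Rightarrow> int \<Rightarrow> int" where
  "reach m t = 2 * m * t - t^2"

lemma reach_chord: "reach m x = reach m a + (2 * m - a - b) * (x - a) + (x - a) * (b - x)"
  by (simp add: reach_def power2_eq_square algebra_simps)

lemma reach_ge_chord:
  assumes "a \<le> x" and "x \<le> b"
  shows "reach m a + (2 * m - a - b) * (x - a) \<le> reach m x"
  using reach_chord[of m x a b] mult_nonneg_nonneg[of "x - a" "b - x"] assms by linarith

lemma even_reach_diff: "even (reach m t - t)"
proof -
  have "reach m t - t = 2 * (m * t) - t * (t + 1)"
    by (simp add: reach_def power2_eq_square algebra_simps)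
  then show ?thesis by simp
qed

definition burn_candidate :: "nat \<Rightarrow> nat \<Rightarrow> nat \<Rightarrow> bool" where
  "burn_candidate m l t \<longleftrightarrow> 0 < t \<and> (even t \<longleftrightarrow> even l) \<and> int l \<le> reach (int m) (int t)"

lemma Bm_eq_Least: "Bm m l = (LEAST t. burn_candidate m l t)"
proof -
  have "(t mod 2 = l mod 2) = (even t \<longleftrightarrow> even l)" for t :: nat
    by (simp add: even_iff_mod_2_eq_zero) presburger
  then show ?thesis by (simp add: Bm_def burn_candidate_def reach_def)
qed

lemma burn_candidate_le_Suc:
  assumes "0 < m" and "l \<le> m^2"
  obtains t where "burn_candidate m l t" and "t \<le> m + 1"
proof (cases "even m \<longleftrightarrow> even l")
  case True
  have "int l \<le> (int m)^2"
    using assms(2) by (metis of_nat_le_iff of_nat_power)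
  moreover have "reach (int m) (int m) = (int m)^2" by (simp add: reach_def power2_eq_square)
  ultimately have "int l \<le> reach (int m) (int m)" by linarith
  then show ?thesis using that[of m] True assms(1) by (simp add: burn_candidate_def)
next
  case False
  then have "l < m^2" using assms(2) by (auto simp: le_less)
  then have "int l < (int m)^2" by (metis of_nat_less_iff of_nat_power)
  moreover have "reach (int m) (int (m + 1)) = (int m)^2 - 1" by (simp add: reach_def power2_eq_square algebra_simps)
  ultimately have "int l \<le> reach (int m) (int (m + 1))" by linarith
  then show ?thesis using that[of "m + 1"] False by (simp add: burn_candidate_def)
qed

lemma
  assumes "0 < m" and "l \<le> m^2"
  shows burn_candidate_Bm: "burn_candidate m l (Bm m l)"
    and Bm_le_Suc: "Bm m l \<le> m + 1"
proof -
  obtain t where t: "burn_candidate m l t" "t \<le> m + 1"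
    using burn_candidate_le_Suc[OF assms] .
  show "burn_candidate m l (Bm m l)"
    unfolding Bm_eq_Least using t(1) by (rule LeastI)
  show "Bm m l \<le> m + 1"
    unfolding Bm_eq_Least using Least_le[of "burn_candidate m l", OF t(1)] t(2) by linarith
qed

lemma reach_Bm_minus_two_le:
  assumes "0 < m" and "l \<le> m^2" and "3 \<le> Bm m l"
  shows "reach (int m) (int (Bm m l) - 2) + 2 \<le> int l"
proof -
  define t where "t = Bm m l"
  have cand: "burn_candidate m l t"
    unfolding t_def using burn_candidate_Bm[OF assms(1,2)] .
  have "\<not> burn_candidate m l (t - 2)"
    unfolding t_def Bm_eq_Least by (rule not_less_Least) (use assms(3) in \<open>simp add: t_def Bm_eq_Least\<close>)
  moreover have "even (t - 2) \<longleftrightarrow> even l"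
    using cand assms(3) unfolding t_def burn_candidate_def by auto
  ultimately have lt: "reach (int m) (int t - 2) < int l"
    using assms(3) unfolding t_def burn_candidate_def by simp
  have "even (int l - reach (int m) (int t - 2))"
    using even_reach_diff[of "int m" "int t - 2"] cand unfolding burn_candidate_def by auto
  then show ?thesis using lt unfolding t_def by presburger
qed

lemma Bm_ge_add_two:
  assumes "0 < m" and "l \<le> m^2" and "t \<le> m" and "even t \<longleftrightarrow> even l"
    and "reach (int m) (int t) < int l"
  shows "t + 2 \<le> Bm m l"
proof -
  have cand: "burn_candidate m l (Bm m l)"
    using burn_candidate_Bm[OF assms(1,2)] .
  have "t < Bm m l"
  proof (rule ccontr)
    assume "\<not> t < Bm m l"
    moreover have "0 \<le> (2 * int m - int (Bm m l) - int t) * (int t - int (Bm m l))"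
      using \<open>\<not> t < Bm m l\<close> assms(3) by (intro mult_nonneg_nonneg) auto
    ultimately have "reach (int m) (int (Bm m l)) \<le> reach (int m) (int t)"
      using reach_ge_chord[of "int (Bm m l)" "int t" "int t" "int m"] by simp
    then show False using cand assms(5) unfolding burn_candidate_def by linarith
  qed
  then show ?thesis using cand assms(4) unfolding burn_candidate_def by presburger
qed

(* By AM-GM, 3c + (10n - 9)/c >= 2 sqrt(30n - 27) for c > 0, which turns a certificate into
   the bound of the theorem. *)
definition bound_certificate :: "int \<Rightarrow> int \<Rightarrow> bool" where
  "bound_certificate n L \<longleftrightarrow> (\<exists>c\<ge>1. c * L \<le> 12 * n * c - 8 * c - 3 * c^2 - 10 * n + 9)"

lemma bound_certificate_imp_sqrt_bound:
  assumes "bound_certificate n L" and "1 \<le> n"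
  shows "real_of_int L \<le> 12 * real_of_int n - 2 * sqrt (30 * real_of_int n - 27) - 8"
proof -
  obtain c where c: "1 \<le> c" "c * L \<le> 12 * n * c - 8 * c - 3 * c^2 - 10 * n + 9"
    using assms(1) unfolding bound_certificate_def by blast
  define r where "r = sqrt (30 * real_of_int n - 27)"
  have "r^2 = 30 * real_of_int n - 27"
    unfolding r_def using assms(2) by simp
  moreover have "0 \<le> (3 * real_of_int c - r)^2" by simp
  ultimately have "6 * real_of_int c * r \<le> 9 * (real_of_int c)^2 + 30 * real_of_int n - 27"
    by (simp add: power2_eq_square algebra_simps)
  moreover have "real_of_int (c * L) \<le> real_of_int (12 * n * c - 8 * c - 3 * c^2 - 10 * n + 9)"
    using c(2) by (simp only: of_int_le_iff)
  ultimately have "real_of_int c * real_of_int L \<le> real_of_int c * (12 * real_of_int n - 2 * r - 8)"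
    by (simp add: algebra_simps)
  then show ?thesis using c(1) unfolding r_def by simp
qed

section \<open>Integer model of an impossibly burnable forest\<close>

(* l and t model the path orders and their values of B_m; sum_burns sharpens the impossibility
   condition sum t > m by parity, as sum t, sum l = m^2 and m all have the same parity. *)
locale burning_family =
  fixes N :: nat and m :: int and l t :: "nat \<Rightarrow> int"
  assumes m_pos: "0 < m"
    and order_pos: "i < N \<Longrightarrow> 1 \<le> l i"
    and sum_orders: "(\<Sum>i<N. l i) = m^2"
    and sum_burns: "m + 2 \<le> (\<Sum>i<N. t i)"
    and burn_le: "i < N \<Longrightarrow> t i \<le> m + 1"
    and reach_burn_minus_two_le: "i < N \<Longrightarrow> 3 \<le> t i \<Longrightarrow> reach m (t i - 2) + 2 \<le> l i"
begin

lemma obtain_max_burn: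
  assumes "0 < N"
  obtains p where "p < N" and "\<forall>i<N. t i \<le> t p"
proof -
  have "Max (t ` {..<N}) \<in> t ` {..<N}"
    using assms by (intro Max_in) auto
  then obtain p where "p < N" and "t p = Max (t ` {..<N})" by auto
  then show ?thesis using that by simp
qed

lemma sum_orders_ge_line:
  assumes "\<forall>i<N. A + k * t i + e i \<le> l i" and "0 \<le> k"
  shows "int N * A + k * (m + 2) + (\<Sum>i<N. e i) \<le> m^2"
proof -
  have "k * (m + 2) \<le> k * (\<Sum>i<N. t i)"
    using sum_burns assms(2) by (rule mult_left_mono)
  also have "int N * A + k * (\<Sum>i<N. t i) + (\<Sum>i<N. e i) = (\<Sum>i<N. A + k * t i + e i)"
    by (simp add: sum.distrib sum_distrib_left)
  also have "\<dots> \<le> (\<Sum>i<N. l i)"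
    using assms(1) by (intro sum_mono) auto
  finally show ?thesis using sum_orders by linarith
qed

lemma largest_burn_bound:
  assumes "p < N" and "3 \<le> t p" and "\<forall>i<N. L \<le> l i"
  shows "(int N - 1) * L + 2 \<le> (m + 2 - t p)^2"
proof -
  have "reach m (t p - 2) = m^2 - (m + 2 - t p)^2"
    by (simp add: reach_def power2_eq_square algebra_simps)
  then have "m^2 - (m + 2 - t p)^2 + 2 \<le> l p"
    using reach_burn_minus_two_le[OF assms(1,2)] by simp
  moreover have "(\<Sum>i\<in>{..<N} - {p}. L) \<le> (\<Sum>i\<in>{..<N} - {p}. l i)"
    using assms(3) by (intro sum_mono) auto
  moreover have "(\<Sum>i<N. l i) = l p + (\<Sum>i\<in>{..<N} - {p}. l i)"
    using assms(1) by (simp add: sum.remove)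
  ultimately show ?thesis
    using assms(1) sum_orders by simp
qed

lemma order_ge_secant:
  assumes p: "p < N" "\<forall>i<N. t i \<le> t p" and i: "i < N"
  shows "(2 * m + 2 - t p) * (t i - 2) \<le> l i"
proof (cases "3 \<le> t i")
  case True
  have "reach m 0 + (2 * m - 0 - (t p - 2)) * (t i - 2 - 0) \<le> reach m (t i - 2)"
    using p(2) i True by (intro reach_ge_chord) auto
  then show ?thesis using reach_burn_minus_two_le[OF i True] by (simp add: reach_def algebra_simps)
next
  case False
  then have "(2 * m + 2 - t p) * (t i - 2) \<le> 0"
    using burn_le[OF p(1)] m_pos by (intro mult_nonneg_nonpos) auto
  then show ?thesis using order_pos[OF i] by linarith
qed

lemma max_burn_gap_le:
  assumes p: "p < N" "\<forall>i<N. t i \<le> t p" and "3 \<le> N" and "4 * int N < m"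
  shows "m + 2 - t p \<le> 4 * int N - 4"
proof (rule ccontr)
  define n q where "n = int N" and "q = m + 2 - t p"
  assume "\<not> m + 2 - t p \<le> 4 * int N - 4"
  then have "(4 * n - 3) * (m + 2 - 2 * n) \<le> q * (m + 2 - 2 * n)"
    using assms(3,4) unfolding n_def q_def by (intro mult_right_mono) auto
  moreover have "n * (- 2 * (m + q)) + (m + q) * (m + 2) \<le> m^2"
    using sum_orders_ge_line[of "- 2 * (m + q)" "m + q" "\<lambda>_. 0"] order_ge_secant[OF p]
      burn_le[OF p(1)] m_pos unfolding n_def q_def by (simp add: algebra_simps)
  then have "q * (m + 2 - 2 * n) \<le> m * (2 * n - 2)"
    by (simp add: power2_eq_square algebra_simps)
  moreover have "m * (2 * n - 2) < (4 * n - 3) * (m + 2 - 2 * n)"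
    using assms(3,4) mult_strict_left_mono[of "4 * n" m "2 * n - 1"] unfolding n_def
    by (simp add: algebra_simps)
  ultimately show False by linarith
qed

lemma head_order_le:
  assumes "3 \<le> N" and "\<forall>i<N. L \<le> l i"
  shows "L \<le> 16 * int N"
proof -
  define n where "n = int N"
  have n3: "3 \<le> n" using assms(1) unfolding n_def by simp
  have nL: "n * L \<le> m^2"
    using sum_orders_ge_line[of L 0 "\<lambda>_. 0"] assms(2) unfolding n_def by simp
  show ?thesis
  proof (cases "m \<le> 4 * n")
    case True
    then have "m^2 \<le> (4 * n)^2"
      using m_pos by (intro power_mono) auto
    then have "n * L \<le> n * (16 * n)"
      using nL by (simp add: power2_eq_square)
    then show ?thesis using assms(1) unfolding n_def by simp
  next
    case False
    obtain p where p: "p < N" "\<forall>i<N. t i \<le> t p"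
      using obtain_max_burn[of thesis] assms(1) by auto
    have "3 \<le> t p"
    proof (rule ccontr)
      assume "\<not> 3 \<le> t p"
      then have "t i \<le> 2" if "i < N" for i using p(2) that by force
      then have "(\<Sum>i<N. t i) \<le> (\<Sum>i<N. 2)" by (intro sum_mono) auto
      then show False using sum_burns False unfolding n_def by simp
    qed
    then have "(n - 1) * L + 2 \<le> (m + 2 - t p)^2"
      using largest_burn_bound p(1) assms(2) unfolding n_def by simp
    also have "\<dots> \<le> (4 * n - 4)^2"
      using max_burn_gap_le[OF p assms(1)] burn_le[OF p(1)] False unfolding n_def
      by (intro power_mono) auto
    finally have "(n - 1) * L \<le> (n - 1) * (16 * n)"
      using n3 by (simp add: power2_eq_square algebra_simps)
    then show ?thesis using n3 unfolding n_def by (simp add: mult_le_cancel_left_pos)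
  qed
qed

(* With T = t p maximal, the bound reach m (t - 2) + 2 on orders with t >= 4 lies above its chord
   over [4, T], of slope 2m - T. So all orders lie above a line of slope k <= 2m - T, with a bonus
   of k at j and of e at p; the cases below are three choices of (k, e). *)
context
  fixes p j :: nat and L :: int
  assumes p: "p < N" "\<forall>i<N. t i \<le> t p" "4 \<le> t p"
    and j: "j < N" "t j \<le> 2"
    and L: "\<forall>i<N. L \<le> l i"
begin

lemma order_ge_line:
  assumes "0 \<le> k" "k \<le> 2 * m - t p" "0 \<le> e" "4 * m - 2 - L \<le> e + k" and i: "i < N"
  shows "4 * m - 2 - e - 4 * k + k * t i + (if i = j then k else 0) + (if i = p then e else 0) \<le> l i"
proof (cases "4 \<le> t i")
  case True
  have "reach m 2 + (2 * m - 2 - (t p - 2)) * (t i - 2 - 2) \<le> reach m (t i - 2)"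
    using p(2) i True by (intro reach_ge_chord) auto
  then have "4 * m - 2 + (2 * m - t p) * (t i - 4) \<le> l i"
    using reach_burn_minus_two_le[OF i] True by (simp add: reach_def)
  moreover have "k * (t i - 4) \<le> (2 * m - t p) * (t i - 4)"
    using assms(2) True by (intro mult_right_mono) auto
  moreover have "i \<noteq> j" using True j by auto
  moreover have "(if i = p then e else 0) \<le> e" using assms(3) by simp
  ultimately show ?thesis by (simp add: right_diff_distrib)
next
  case False
  moreover have "i \<noteq> p" using False p(3) by auto
  moreover have "k * t i + (if i = j then k else 0) \<le> 3 * k"
    using False j(2) assms(1) mult_left_mono[of "t i" 3 k] mult_left_mono[of "t i" 2 k] by auto
  ultimately show ?thesis using L i assms(4) by fastforce
qed

lemma line_sum_bound:
  assumes "0 \<le> k" "k \<le> 2 * m - t p" "0 \<le> e" "4 * m - 2 - L \<le> e + k"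
  shows "int N * (4 * m - 2) + k * (m + 3 - 4 * int N) - (int N - 1) * e \<le> m^2"
proof -
  have "p \<noteq> j" using p(3) j(2) by auto
  then have "(\<Sum>i<N. (if i = j then k else 0) + (if i = p then e else 0)) = k + e"
    using p(1) j(1) by (simp add: sum.distrib)
  moreover have "int N * (4 * m - 2 - e - 4 * k) + k * (m + 2)
      + (\<Sum>i<N. (if i = j then k else 0) + (if i = p then e else 0)) \<le> m^2"
    using order_ge_line[OF assms] assms(1) by (intro sum_orders_ge_line) (simp add: add.assoc)
  ultimately show ?thesis by (simp add: algebra_simps)
qed

lemma bound_certificate_flat:
  assumes "4 * m - 2 - L \<le> 2 * m - t p" "0 \<le> 4 * m - 2 - L" and "m \<le> 4 * int N - 4"
  shows "bound_certificate (int N) L"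
proof -
  define n where "n = int N"
  define c where "c = 4 * n - 3 - m"
  have "n * (4 * m - 2) + (4 * m - 2 - L) * (m + 3 - 4 * n) \<le> m^2"
    using line_sum_bound[of "4 * m - 2 - L" 0] assms(1,2) unfolding n_def by simp
  moreover have "n * (4 * m - 2) + (4 * m - 2 - L) * (m + 3 - 4 * n)
      = c * L - (12 * n * c - 8 * c - 3 * c^2 - 10 * n + 9) + m^2"
    unfolding c_def by (simp add: power2_eq_square algebra_simps)
  moreover have "1 \<le> c" using assms(3) unfolding c_def n_def by simp
  ultimately show ?thesis unfolding bound_certificate_def n_def[symmetric] by auto
qed

lemma steep_if_large:
  assumes "4 * int N - 4 < m"
  shows "2 * m - t p < 4 * m - 2 - L"
proof (rule ccontr)
  define n where "n = int N"
  assume flat: "\<not> 2 * m - t p < 4 * m - 2 - L"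
  have "t p \<le> 2 * m" using burn_le[OF p(1)] m_pos by simp
  then have "n * (4 * m - 2) + (2 * m - t p) * (m + 3 - 4 * n) \<le> m^2"
    using line_sum_bound[of "2 * m - t p" 0] flat unfolding n_def by simp
  moreover have "(m - 1) * (m + 3 - 4 * n) \<le> (2 * m - t p) * (m + 3 - 4 * n)"
    using burn_le[OF p(1)] assms unfolding n_def by (intro mult_right_mono) auto
  moreover have "n * (4 * m - 2) + (m - 1) * (m + 3 - 4 * n) = m^2 + 2 * m + 2 * n - 3"
    by (simp add: power2_eq_square algebra_simps)
  ultimately show False using m_pos p(1) unfolding n_def by linarith
qed

lemma bound_certificate_steep:
  assumes "2 * m - t p < 4 * m - 2 - L" and "3 * int N - 3 < m"
  shows "bound_certificate (int N) L"
proof -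
  define n where "n = int N"
  define q where "q = m + 2 - t p"
  have "t p \<le> 2 * m" using burn_le[OF p(1)] m_pos by simp
  then have "n * (4 * m - 2) + (2 * m - t p) * (m + 3 - 4 * n) - (n - 1) * (4 * m - 2 - L - (2 * m - t p))
      \<le> m^2"
    using line_sum_bound[of "2 * m - t p" "4 * m - 2 - L - (2 * m - t p)"] assms(1)
    unfolding n_def by simp
  moreover have "n * (4 * m - 2) + (2 * m - t p) * (m + 3 - 4 * n) - (n - 1) * (4 * m - 2 - L - (2 * m - t p))
      = 4 * m - 2 + (n - 1) * L + (m - 2 + q) * (m + 2 - 3 * n)"
    unfolding q_def by (simp add: algebra_simps)
  ultimately have cert: "4 * m - 2 + (n - 1) * L + (m - 2 + q) * (m + 2 - 3 * n) \<le> m^2"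
    by linarith
  have "(n - 1) * L + 2 \<le> (3 * n - 4)^2"
  proof (cases "q \<le> 3 * n - 4")
    case True
    have "(n - 1) * L + 2 \<le> q^2"
      using largest_burn_bound[of p L] p L unfolding n_def q_def by simp
    also have "q^2 \<le> (3 * n - 4)^2"
      using True burn_le[OF p(1)] unfolding q_def by (intro power_mono) auto
    finally show ?thesis .
  next
    case False
    then have "(m + 3 * n - 5) * (m + 2 - 3 * n) \<le> (m - 2 + q) * (m + 2 - 3 * n)"
      using assms(2) unfolding n_def by (intro mult_right_mono) auto
    moreover have "(m + 3 * n - 5) * (m + 2 - 3 * n) = m^2 - 3 * m - 9 * n^2 + 21 * n - 10"
      by (simp add: power2_eq_square algebra_simps)
    moreover have "(3 * n - 4)^2 = 9 * n^2 - 24 * n + 16"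
      by (simp add: power2_eq_square algebra_simps)
    ultimately show ?thesis using cert assms(2) unfolding n_def by linarith
  qed
  moreover have "12 * n * (n - 1) - 8 * (n - 1) - 3 * (n - 1)^2 - 10 * n + 9 = (3 * n - 4)^2 - 2"
    by (simp add: power2_eq_square algebra_simps)
  moreover have "j \<noteq> p" using p(3) j(2) by auto
  then have "2 \<le> n" using p(1) j(1) unfolding n_def by linarith
  ultimately show ?thesis
    unfolding bound_certificate_def n_def[symmetric] by (intro exI[of _ "n - 1"]) auto
qed

end

lemma max_burn_ge_four:
  assumes p: "p < N" "\<forall>i<N. t i \<le> t p" and j: "j < N" "t j \<le> 2" and "3 * int N - 3 < m"
  shows "4 \<le> t p"
proof (rule ccontr)
  assume "\<not> 4 \<le> t p"
  then have "t i \<le> 3 - (if i = j then 1 else 0)" if "i < N" for i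
    using p(2) that j(2) by (cases "i = j") auto
  then have "(\<Sum>i<N. t i) \<le> (\<Sum>i<N. 3 - (if i = j then 1 else 0))"
    by (intro sum_mono) auto
  also have "\<dots> = 3 * int N - 1"
    using j(1) by (simp add: sum_subtractf)
  finally show False using sum_burns assms(5) by linarith
qed

lemma small_burn_certificate:
  assumes "3 \<le> N" and L: "\<forall>i<N. L \<le> l i" and j: "j < N" "t j \<le> 2" and "L \<le> 4 * m - 2"
  shows "bound_certificate (int N) L"
proof (cases "m \<le> 3 * int N - 3")
  case True
  have "int N * L \<le> m^2"
    using sum_orders_ge_line[of L 0 "\<lambda>_. 0"] L by simp
  also have "m^2 \<le> (3 * int N - 3)^2"
    using True m_pos by (intro power_mono) auto
  also have "(3 * int N - 3)^2 = 12 * int N * int N - 8 * int N - 3 * (int N)^2 - 10 * int N + 9"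
    by (simp add: power2_eq_square algebra_simps)
  finally show ?thesis
    unfolding bound_certificate_def using assms(1) by (intro exI[of _ "int N"]) auto
next
  case False
  obtain p where p: "p < N" "\<forall>i<N. t i \<le> t p"
    using obtain_max_burn[of thesis] assms(1) by auto
  have "4 \<le> t p" using max_burn_ge_four[OF p j] False by simp
  note p = p this
  show ?thesis
  proof (cases "2 * m - t p < 4 * m - 2 - L")
    case True
    then show ?thesis using bound_certificate_steep[OF p j L] False by simp
  next
    case False
    then show ?thesis using bound_certificate_flat[OF p j L] steep_if_large[OF p j L] assms(5) by force
  qed
qed

end

lemma impossibly_burnable_nth_le:
  assumes "impossibly_burnable m ls" and "i < length ls"
  shows "ls ! i \<le> m^2"
  using assms member_le_sum_list[of "ls ! i" ls]
  unfolding impossibly_burnable_def path_forest_def by simp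

lemma burning_family_of_impossibly_burnable:
  assumes IB: "impossibly_burnable m ls" and "0 < length ls"
  shows "burning_family (length ls) (int m) (\<lambda>i. int (ls ! i)) (\<lambda>i. int (Bm m (ls ! i)))"
proof -
  define n where "n = length ls"
  have pos: "\<And>i. i < n \<Longrightarrow> 1 \<le> ls ! i"
    and sum_ls: "(\<Sum>i<n. ls ! i) = m^2" and sum_Bm: "m < (\<Sum>i<n. Bm m (ls ! i))"
    using IB unfolding impossibly_burnable_def path_forest_def n_def
    by (auto simp: sum_list_sum_nth atLeast0LessThan)
  have le: "\<And>i. i < n \<Longrightarrow> ls ! i \<le> m^2"
    using impossibly_burnable_nth_le[OF IB] unfolding n_def .
  have m_pos: "0 < m"
    using le[of 0] pos[of 0] assms(2) unfolding n_def by (cases m) auto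
  have "even (Bm m (ls ! i) + ls ! i)" if "i < n" for i
    using burn_candidate_Bm[OF m_pos le[OF that]] unfolding burn_candidate_def by simp
  then have "even (\<Sum>i<n. Bm m (ls ! i) + ls ! i)" by (intro dvd_sum) auto
  then have "even ((\<Sum>i<n. Bm m (ls ! i)) + m^2)" by (simp add: sum.distrib sum_ls)
  moreover have "even (m^2 + m)" by simp
  ultimately have "m + 2 \<le> (\<Sum>i<n. Bm m (ls ! i))" using sum_Bm by presburger
  then have sum_burns: "int m + 2 \<le> (\<Sum>i<n. int (Bm m (ls ! i)))"
    by (simp add: of_nat_sum[symmetric] del: of_nat_sum)
  show ?thesis
    unfolding n_def[symmetric]
  proof
    show "0 < int m" using m_pos by simp
    show "(\<Sum>i<n. int (ls ! i)) = (int m)^2" using sum_ls by (metis of_nat_sum of_nat_power)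
    show "int m + 2 \<le> (\<Sum>i<n. int (Bm m (ls ! i)))" by (fact sum_burns)
    fix i assume i: "i < n"
    show "1 \<le> int (ls ! i)" using pos[OF i] by simp
    show "int (Bm m (ls ! i)) \<le> int m + 1" using Bm_le_Suc[OF m_pos le[OF i]] by simp
    show "reach (int m) (int (Bm m (ls ! i)) - 2) + 2 \<le> int (ls ! i)" if "3 \<le> int (Bm m (ls ! i))"
      using reach_Bm_minus_two_le[OF m_pos le[OF i]] that by simp
  qed
qed

lemma head_le_of_sorted:
  assumes "sorted ls" and "i < length ls"
  shows "int (ls ! 0) \<le> int (ls ! i)"
  using sorted_nth_mono[OF assms(1), of 0 i] assms(2) by simp

lemma head_le_sqrt_bound:
  assumes "3 \<le> length ls" and "sorted ls" and IB: "impossibly_burnable m ls"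
    and j: "j < length ls" "Bm m (ls ! j) \<le> 2"
  shows "real (ls ! 0) \<le> 12 * real (length ls) - 2 * sqrt (30 * real (length ls) - 27) - 8"
proof -
  interpret burning_family "length ls" "int m" "\<lambda>i. int (ls ! i)" "\<lambda>i. int (Bm m (ls ! i))"
    using burning_family_of_impossibly_burnable[OF IB] assms(1) by fastforce
  have cand: "burn_candidate m (ls ! j) (Bm m (ls ! j))"
    using burn_candidate_Bm m_pos impossibly_burnable_nth_le[OF IB j(1)] by simp
  have "Bm m (ls ! j) = 1 \<or> Bm m (ls ! j) = 2"
    using cand j(2) unfolding burn_candidate_def by auto
  then have "reach (int m) (int (Bm m (ls ! j))) \<le> 4 * int m - 2"
    using m_pos by (auto simp: reach_def)
  then have "int (ls ! 0) \<le> 4 * int m - 2"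
    using cand head_le_of_sorted[OF assms(2) j(1)] unfolding burn_candidate_def by linarith
  then have "bound_certificate (int (length ls)) (int (ls ! 0))"
    using small_burn_certificate[OF assms(1) _ j(1)] j(2) head_le_of_sorted[OF assms(2)] by simp
  from bound_certificate_imp_sqrt_bound[OF this] assms(1) show ?thesis by simp
qed

lemma head_le_Mn:
  assumes "3 \<le> length ls" and "sorted ls" and "impossibly_burnable m ls"
  shows "ls ! 0 \<le> Mn (length ls)"
proof -
  define P where "P = (\<lambda>x. \<exists>m ls'. length ls' = length ls \<and> sorted ls' \<and> impossibly_burnable m ls' \<and> x = ls' ! 0)"
  have "y \<le> 16 * length ls" if "P y" for y
  proof -
    obtain m' ls' where ls': "length ls' = length ls" "sorted ls'" "impossibly_burnable m' ls'" "y = ls' ! 0"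
      using \<open>P y\<close> unfolding P_def by blast
    interpret burning_family "length ls'" "int m'" "\<lambda>i. int (ls' ! i)" "\<lambda>i. int (Bm m' (ls' ! i))"
      using burning_family_of_impossibly_burnable[OF ls'(3)] ls'(1) assms(1) by fastforce
    show ?thesis
      using head_order_le[of "int (ls' ! 0)"] head_le_of_sorted[OF ls'(2)] ls'(1,4) assms(1) by simp
  qed
  moreover have "P (ls ! 0)" unfolding P_def using assms(2,3) by blast
  ultimately show ?thesis unfolding Mn_def P_def[symmetric] by (rule Greatest_le_nat[rotated])
qed

section \<open>A forest beyond the bound\<close>

lemma impossibly_burnable_blocks:
  fixes a b r L m :: nat
  defines "ls \<equiv> replicate (a - r) L @ replicate r (L + 2) @ replicate b (4 * m - 2)"
  assumes "odd L" "2 * m + 1 \<le> L" "L \<le> 4 * m - 4" "r < a"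
    and sum: "a * L + 2 * r + b * (4 * m - 2) = m^2" and "m < 3 * a + 4 * b"
  shows "length ls = a + b" "sorted ls" "ls ! 0 = L" "impossibly_burnable m ls"
proof -
  show "length ls = a + b" "sorted ls" "ls ! 0 = L"
    unfolding ls_def using assms(3-5) by (auto simp: sorted_append nth_append)
  have m3: "3 \<le> m" using assms(3,4) by linarith
  obtain d where "a = r + d" using assms(5) less_imp_add_positive by blast
  then have "(a - r) * L + r * (L + 2) = a * L + 2 * r" by (simp add: algebra_simps)
  then have sum_ls: "sum_list ls = m^2"
    using sum unfolding ls_def by (simp add: sum_list_replicate)
  then have le: "x \<le> m^2" if "x \<in> set ls" for x
    using member_le_sum_list[OF that] by simp
  have mem: "L \<in> set ls" "0 < r \<Longrightarrow> L + 2 \<in> set ls" "0 < b \<Longrightarrow> 4 * m - 2 \<in> set ls"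
    unfolding ls_def using assms(5) by auto
  have B3: "3 \<le> Bm m x" if "x \<in> {L, L + 2}" "x \<in> set ls" for x
    using Bm_ge_add_two[of m x 1] le[OF that(2)] that(1) m3 assms(2,3) by (auto simp: reach_def)
  have B4: "4 \<le> Bm m (4 * m - 2)" if "0 < b"
    using Bm_ge_add_two[of m "4 * m - 2" 2] le[OF mem(3)[OF that]] m3 by (simp add: reach_def)
  have "3 * (a - r) \<le> (a - r) * Bm m L" using B3[of L] mem(1) by simp
  moreover have "3 * r \<le> r * Bm m (L + 2)" using B3[of "L + 2"] mem(2) by (cases "r = 0") auto
  moreover have "4 * b \<le> b * Bm m (4 * m - 2)" using B4 by (cases "b = 0") auto
  moreover have "sum_list (map (Bm m) ls) = (a - r) * Bm m L + r * Bm m (L + 2) + b * Bm m (4 * m - 2)"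
    unfolding ls_def by (simp add: sum_list_replicate)
  ultimately have "3 * (a - r) + 3 * r + 4 * b \<le> sum_list (map (Bm m) ls)" by linarith
  then have "m < sum_list (map (Bm m) ls)" using assms(5,7) by linarith
  moreover have "1 \<le> x" if "x \<in> set ls" for x
    using that assms(3) m3 unfolding ls_def by (auto split: if_splits)
  ultimately show "impossibly_burnable m ls"
    unfolding impossibly_burnable_def path_forest_def using sum_ls by auto
qed

lemma obtain_odd_quotient:
  fixes a S :: nat
  assumes "0 < a" and "a \<le> S" and "even (S + a)"
  obtains L r where "odd L" and "r < a" and "S = a * L + 2 * r"
proof -
  define h where "h = (S - a) div 2"
  define q r where "q = h div a" and "r = h mod a"
  have "h = a * q + r" unfolding q_def r_def by simp
  moreover have "S = 2 * h + a" using assms(2,3) unfolding h_def by presburger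
  ultimately have "S = a * (2 * q + 1) + 2 * r" by (simp add: algebra_simps)
  moreover have "r < a" using assms(1) unfolding r_def by simp
  ultimately show ?thesis using that[of "2 * q + 1" r] by simp
qed

lemma odd_quotient_bounds:
  fixes a L r k h :: nat
  assumes "odd L" and "r < a" and "a * (2 * k + 1) \<le> a * L + 2 * r" and "a * L + 2 * r \<le> a * h"
  shows "2 * k + 1 \<le> L" and "L \<le> h"
proof -
  have "a * (2 * k + 1) < a * (L + 2)" using assms(2,3) by (simp add: algebra_simps)
  then have "2 * k + 1 < L + 2" by (meson mult_less_cancel1)
  moreover have "L \<noteq> 2 * k" using assms(1) by auto
  ultimately show "2 * k + 1 \<le> L" by simp
  have "a * L \<le> a * h" using assms(4) by linarith
  then show "L \<le> h" using assms(2) by simp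
qed

lemma obtain_witness_orders:
  fixes a b :: nat
  assumes "2 \<le> a" and "1 \<le> b"
  defines "m \<equiv> 3 * a + 4 * b - 2"
  obtains L r where "odd L" and "r < a" and "2 * m + 1 \<le> L" and "L \<le> 4 * m - 4"
    and "a * L + 2 * r = m * (3 * a - 2) + 2 * b"
proof -
  define S where "S = m * (3 * a - 2) + 2 * b"
  have im: "int m = 3 * int a + 4 * int b - 2" unfolding m_def using assms(1) by simp
  have iS: "int S = int m * (3 * int a - 2) + 2 * int b" unfolding S_def using assms(1) by simp
  define k j where "k = a + 2 * b - 1" and "j = a - 1"
  have mk: "m = a + 2 * k" and jk: "3 * a - 2 = a + 2 * j"
    unfolding m_def k_def j_def using assms(1) by simp_all
  have "S + a = a * (a + 1) + 2 * (a * j + k * a + 2 * k * j + b)"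
    unfolding S_def mk jk by (simp add: algebra_simps)
  then have even_Sa: "even (S + a)" by simp
  have "int m \<le> int m * (3 * int a - 2)"
    using assms(1) mult_left_mono[of 1 "3 * int a - 2" "int m"] by simp
  then have "a \<le> S" using im iS assms(2) by linarith
  then obtain L r where L: "odd L" "r < a" "S = a * L + 2 * r"
    using obtain_odd_quotient[OF _ _ even_Sa] assms(1) by auto
  have "int a \<le> int m * (int a - 2) + 2 * int b"
  proof (cases "a = 2")
    case False
    then have "int m \<le> int m * (int a - 2)"
      using assms(1) mult_left_mono[of 1 "int a - 2" "int m"] by simp
    then show ?thesis using im assms by linarith
  qed (use assms(2) in simp)
  then have "int (a * (2 * m + 1)) \<le> int S" using iS by (simp add: algebra_simps)
  moreover have "int S \<le> int (a * (4 * m - 4))"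
  proof -
    have "1 \<le> m" unfolding m_def using assms(1) by simp
    then have "int (a * (4 * m - 4)) = int a * (4 * int m - 4)" by simp
    then have "int (a * (4 * m - 4)) - int S = (int a + 2) * int m - 4 * int a - 2 * int b"
      using iS by (simp add: algebra_simps)
    moreover have "4 * int m \<le> (int a + 2) * int m" using assms(1) by (intro mult_right_mono) auto
    ultimately show ?thesis using im assms(1) by linarith
  qed
  ultimately have "a * (2 * m + 1) \<le> a * L + 2 * r" "a * L + 2 * r \<le> a * (4 * m - 4)"
    using L(3) by (simp_all only: of_nat_le_iff)
  then have "2 * m + 1 \<le> L" "L \<le> 4 * m - 4"
    using odd_quotient_bounds[OF L(1,2)] by simp_all
  then show ?thesis using that[OF L(1,2)] L(3) unfolding S_def by simp
qed

lemma witness_sqrt_estimate: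
  fixes n a :: real
  assumes a2: "a \<ge> 2" and lo: "a^2 \<le> 2 * n" and hi: "2 * n \<le> a^2 + 2 * a"
  shows "3 * a^2 + 6 * n - 4 \<le> 2 * a * sqrt (30 * n - 27)"
proof -
  define r where "r = sqrt (30 * n - 27)"
  have a4: "a^2 \<ge> 4" using a2 mult_mono[OF a2 a2] by (simp add: power2_eq_square)
  have r0: "r \<ge> 0" and r2: "r^2 = 30 * n - 27"
    unfolding r_def using lo a4 by simp_all
  define e where "e = 2 * n - a^2"
  have e0: "0 \<le> e" "e \<le> 2 * a" using lo hi unfolding e_def by auto
  have "(3 * a^2 + 6 * n - 4)^2 \<le> (2 * a * r)^2"
  proof -
    have "(2 * a * r)^2 = 4 * a^2 * (30 * n - 27)"
      using r2 by (simp add: power_mult_distrib)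
    then have "(2 * a * r)^2 - (3 * a^2 + 6 * n - 4)^2
        = 24 * (a^2 * a^2) + 24 * (a^2 * e) - 60 * a^2 - 9 * (e * e) + 24 * e - 16"
      unfolding e_def by (simp add: power2_eq_square algebra_simps)
    moreover have "9 * (e * e) \<le> 18 * (a * e)"
      using e0 mult_right_mono[OF e0(2) e0(1)] by (simp add: algebra_simps)
    moreover have "a * e \<le> a^2 * e"
      using e0 a2 mult_right_mono[of a "a^2" e] a4 by (simp add: power2_eq_square)
    moreover have "a^2 * a^2 \<ge> 4 * a^2" using a4 mult_right_mono[OF a4, of "a^2"] by simp
    moreover have "0 \<le> a^2 * e" using e0 by simp
    ultimately show ?thesis using e0 a4 by linarith
  qed
  moreover have "0 \<le> 2 * a * r" using a2 r0 by simp
  ultimately show ?thesis unfolding r_def[symmetric] by (rule power2_le_imp_le)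
qed

lemma witness_head_gt_sqrt_bound:
  fixes a b L r :: nat
  assumes "2 \<le> a" and "a^2 \<le> 2 * (a + b)" and "2 * (a + b) < (a + 1)^2" and "r < a"
    and "a * L + 2 * r = (3 * a + 4 * b - 2) * (3 * a - 2) + 2 * b"
  shows "12 * real (a + b) - 2 * sqrt (30 * real (a + b) - 27) - 8 < real L"
proof -
  define n where "n = real (a + b)"
  have "real (a * L + 2 * r) = real ((3 * a + 4 * b - 2) * (3 * a - 2) + 2 * b)"
    using assms(5) by simp
  then have "real a * real L + 2 * real r = (3 * real a + 4 * real b - 2) * (3 * real a - 2) + 2 * real b"
    using assms(1) by (simp add: of_nat_diff)
  moreover have "(3 * real a + 4 * real b - 2) * (3 * real a - 2) + 2 * real b - 2 * real a
      = 12 * n * real a - 6 * n - 3 * (real a)^2 - 8 * real a + 4"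
    unfolding n_def by (simp add: power2_eq_square algebra_simps)
  moreover have "3 * (real a)^2 + 6 * n - 4 \<le> 2 * real a * sqrt (30 * n - 27)"
  proof (rule witness_sqrt_estimate)
    have "2 * (a + b) \<le> a^2 + 2 * a" using assms(3) by (simp add: power2_eq_square)
    then have "real (2 * (a + b)) \<le> real (a^2 + 2 * a)" by (simp only: of_nat_le_iff)
    then show "2 * n \<le> (real a)^2 + 2 * real a" unfolding n_def by simp
    have "real (a^2) \<le> real (2 * (a + b))" using assms(2) by (simp only: of_nat_le_iff)
    then show "(real a)^2 \<le> 2 * n" unfolding n_def by simp
  qed (use assms(1) in simp)
  ultimately have "real a * (12 * n - 2 * sqrt (30 * n - 27) - 8) < real a * real L"
    using assms(4) by (simp add: algebra_simps)
  then show ?thesis using assms(1) unfolding n_def by (simp add: mult_less_cancel_left_pos)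
qed

lemma witness_sum_orders:
  fixes a b :: nat
  assumes "2 \<le> a"
  defines "m \<equiv> 3 * a + 4 * b - 2"
  shows "m * (3 * a - 2) + 2 * b + b * (4 * m - 2) = m^2"
proof -
  have "int (m * (3 * a - 2) + 2 * b + b * (4 * m - 2))
      = int m * (3 * int a - 2) + 2 * int b + int b * (4 * int m - 2)"
    unfolding m_def using assms(1) by simp
  also have "\<dots> = int m * (3 * int a + 4 * int b - 2)" by (simp add: algebra_simps)
  also have "3 * int a + 4 * int b - 2 = int m" unfolding m_def using assms(1) by simp
  finally show ?thesis by (simp only: power2_eq_square of_nat_mult[symmetric] of_nat_eq_iff)
qed

(* With n = a + b and m = 4n - a - 2, the a paths of odd order L or L + 2 above 2m and the b
   paths of order 4m - 2 have B_m at least 3 and 4, summing to m + 2; choosing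
   a = floor(sqrt(2n)) pushes L beyond the bound. *)
lemma exists_impossibly_burnable_above_sqrt_bound:
  assumes "3 \<le> n"
  obtains m ls where "length ls = n" and "sorted ls" and "impossibly_burnable m ls"
    and "12 * real n - 2 * sqrt (30 * real n - 27) - 8 < real (ls ! 0)"
proof -
  define a where "a = floor_sqrt (2 * n)"
  have a_sq: "a^2 \<le> 2 * n" "2 * n < (a + 1)^2"
    unfolding a_def using Suc_floor_sqrt_power2_gt[of "2 * n"] by simp_all
  have a2: "2 \<le> a" unfolding a_def using assms by (intro le_floor_sqrtI) simp
  have "a < n"
  proof (rule ccontr)
    assume "\<not> a < n"
    then have "n * n \<le> 2 * n"
      using a_sq(1) mult_le_mono[of n a n a] unfolding power2_eq_square by linarith
    moreover have "3 * n \<le> n * n" using assms by simp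
    ultimately show False using assms by linarith
  qed
  define b where "b = n - a"
  define m where "m = 3 * a + 4 * b - 2"
  have n: "n = a + b" and b1: "1 \<le> b" unfolding b_def using \<open>a < n\<close> by simp_all
  obtain L r where L: "odd L" "r < a" "2 * m + 1 \<le> L" "L \<le> 4 * m - 4"
    and eq: "a * L + 2 * r = m * (3 * a - 2) + 2 * b"
    using obtain_witness_orders[OF a2 b1] unfolding m_def by blast
  have sum: "a * L + 2 * r + b * (4 * m - 2) = m^2"
    using witness_sum_orders[OF a2, of b] eq unfolding m_def by simp
  have "m < 3 * a + 4 * b" unfolding m_def using a2 by simp
  note blocks = impossibly_burnable_blocks[OF L(1,3,4,2) sum this]
  have "12 * real n - 2 * sqrt (30 * real n - 27) - 8 < real L"
    using witness_head_gt_sqrt_bound[OF a2 _ _ L(2) eq[unfolded m_def]] a_sq unfolding n by simp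
  then show ?thesis using that[OF blocks(1)[folded n] blocks(2,4)] blocks(3) by simp
qed

theorem mainTheorem4:
  fixes n m :: nat and ls :: "nat list"
  assumes "n \<ge> 3" and "length ls = n" and "sorted ls" and "impossibly_burnable m ls"
  shows "((\<exists>i<n. Bm m (ls ! i) \<le> 2) \<longrightarrow>
           real (ls ! 0) \<le> 12 * real n - 2 * sqrt (30 * real n - 27) - 8)
         \<and> (ls ! 0 = Mn n \<longrightarrow> (\<forall>i<n. 3 \<le> Bm m (ls ! i)))"
proof (intro conjI impI allI)
  show "real (ls ! 0) \<le> 12 * real n - 2 * sqrt (30 * real n - 27) - 8"
    if "\<exists>i<n. Bm m (ls ! i) \<le> 2"
    using that head_le_sqrt_bound[OF _ assms(3,4)] assms(1,2) by auto
next
  fix i assume head: "ls ! 0 = Mn n" and "i < n"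
  show "3 \<le> Bm m (ls ! i)"
  proof (rule ccontr)
    assume "\<not> 3 \<le> Bm m (ls ! i)"
    then have "real (ls ! 0) \<le> 12 * real n - 2 * sqrt (30 * real n - 27) - 8"
      using head_le_sqrt_bound[OF _ assms(3,4)] \<open>i < n\<close> assms(1,2) by simp
    moreover obtain m' ls' where "length ls' = n" "sorted ls'" "impossibly_burnable m' ls'"
      and "12 * real n - 2 * sqrt (30 * real n - 27) - 8 < real (ls' ! 0)"
      using exists_impossibly_burnable_above_sqrt_bound[OF assms(1)] by blast
    moreover have "ls' ! 0 \<le> Mn n"
      using head_le_Mn[of ls' m'] calculation(2-4) assms(1) by simp
    ultimately show False using head by simp
  qed
qed

end
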